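(* If $X$ and $Y$ are metric spaces with asymptotic property C, then the product $X\times Y$ has asymptotic property C.
   Context: For $R>0$, a family $\mathcal U$ of nonempty subsets of a metric space is $R$-disjoint if $d(A,B)>R$ for all distinct $A,B\in\mathcal U$, where $d(A,B)=\inf\{d(a,b):a\in A,b\in B\}$. A family $\mathcal U$ is uniformly bounded if $\sup\{\operatorname{diam}U:U\in\mathcal U\}<\infty$. A metric space $X$ has asymptotic property C if for every sequence $R_0\le R_1\le R_2\le\cdots$ of positive reals there exist $n\ge 0$ and uniformly bounded $R_i$-disjoint families $\mathcal U_i$ ($i=0,\dots,n$) of subsets of $X$ such that $\bigcup_{i=0}^n\mathcal U_i$ covers $X$. The product $X\times Y$ carries any of the standard product metrics (e.g. $d((x,y),(x',y'))=\max(d_X(x,x'),d_Y(y,y'))$ or the sum metric; these are bi-Lipschitz equivalent). *)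

theory Defs
  imports "HOL-Analysis.Analysis"
begin

definition R_disjoint :: "real \<Rightarrow> 'a::metric_space set set \<Rightarrow> bool" where
  "R_disjoint R \<U> \<longleftrightarrow> (\<forall>A\<in>\<U>. A \<noteq> {}) \<and>
     (\<forall>A\<in>\<U>. \<forall>B\<in>\<U>. A \<noteq> B \<longrightarrow> setdist A B > R)"

definition uniformly_bounded :: "'a::metric_space set set \<Rightarrow> bool" where
  "uniformly_bounded \<U> \<longleftrightarrow> (\<exists>D. \<forall>U\<in>\<U>. \<forall>x\<in>U. \<forall>y\<in>U. dist x y \<le> D)"

definition asymptotic_property_C :: "'a::metric_space set \<Rightarrow> bool" where
  "asymptotic_property_C S \<longleftrightarrow>
    (\<forall>R :: nat \<Rightarrow> real. (\<forall>i. R i > 0) \<and> mono R \<longrightarrow>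
      (\<exists>n. \<exists>\<U> :: nat \<Rightarrow> 'a set set.
         (\<forall>i\<le>n. (\<forall>U\<in>\<U> i. U \<subseteq> S) \<and> uniformly_bounded (\<U> i) \<and> R_disjoint (R i) (\<U> i)) \<and>
         S \<subseteq> (\<Union>i\<le>n. \<Union>(\<U> i))))"

end

theory Submission
  imports Defs
begin

text \<open>Given scales R, cover X by families that are T-disjoint, where T grows so fast that the
  scales can be cut into consecutive blocks b i, ..., b i + N i such that Y has a cover by families
  disjoint at exactly the scales of block i, and T i dominates all of them. At level b i + j the
  product cover pairs the i-th family of X with the j-th family of the i-th cover of Y: two products
  are at least as far apart as their differing factors, so this family is R (b i + j)-disjoint.\<close>

definition prod_family :: "'a set set \<Rightarrow> 'b set set \<Rightarrow> ('a \<times> 'b) set set" where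
  "prod_family \<U> \<V> = {U \<times> V | U V. U \<in> \<U> \<and> V \<in> \<V>}"

definition bounded_R_disjoint :: "real \<Rightarrow> 'a::metric_space set \<Rightarrow> 'a set set \<Rightarrow> bool" where
  "bounded_R_disjoint r S \<U> \<longleftrightarrow> (\<forall>U\<in>\<U>. U \<subseteq> S) \<and> uniformly_bounded \<U> \<and> R_disjoint r \<U>"

definition C_cover :: "(nat \<Rightarrow> real) \<Rightarrow> 'a::metric_space set \<Rightarrow> nat \<Rightarrow> (nat \<Rightarrow> 'a set set) \<Rightarrow> bool" where
  "C_cover R S n \<U> \<longleftrightarrow> (\<forall>i\<le>n. bounded_R_disjoint (R i) S (\<U> i)) \<and> S \<subseteq> (\<Union>i\<le>n. \<Union>(\<U> i))"

lemma asymptotic_property_C_iff_C_cover: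
  "asymptotic_property_C S \<longleftrightarrow> (\<forall>R. (\<forall>i. R i > 0) \<and> mono R \<longrightarrow> (\<exists>n \<U>. C_cover R S n \<U>))"
  by (simp add: asymptotic_property_C_def C_cover_def bounded_R_disjoint_def)

lemma asymptotic_property_C_shifted_covers:
  assumes "asymptotic_property_C S" "\<And>i. R i > 0" "mono R"
  obtains N \<V> where "\<And>k. C_cover (\<lambda>j. R (k + j)) S (N k) (\<V> k)"
proof -
  have "\<exists>n \<V>. C_cover (\<lambda>j. R (k + j)) S n \<V>" for k
    using assms monoD[OF \<open>mono R\<close>]
    by (auto simp: asymptotic_property_C_iff_C_cover mono_def)
  then show thesis
    using that by metis
qed

lemma dist_Pair_le_add: "dist (a, b) (c, d) \<le> dist a c + dist b d"
  by (simp add: dist_Pair_Pair sqrt_sum_squares_le_sum)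

lemma setdist_le_setdist_Times_fst:
  assumes "A \<times> B \<noteq> {}" "C \<times> D \<noteq> {}"
  shows "setdist A C \<le> setdist (A \<times> B) (C \<times> D)"
proof (rule le_setdistI[OF assms])
  fix p q assume "p \<in> A \<times> B" "q \<in> C \<times> D"
  then have "setdist A C \<le> dist (fst p) (fst q)"
    by (auto intro: setdist_le_dist)
  also have "\<dots> \<le> dist p q"
    by (rule dist_fst_le)
  finally show "setdist A C \<le> dist p q" .
qed

lemma setdist_le_setdist_Times_snd:
  assumes "A \<times> B \<noteq> {}" "C \<times> D \<noteq> {}"
  shows "setdist B D \<le> setdist (A \<times> B) (C \<times> D)"
proof (rule le_setdistI[OF assms])
  fix p q assume "p \<in> A \<times> B" "q \<in> C \<times> D"
  then have "setdist B D \<le> dist (snd p) (snd q)"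
    by (auto intro: setdist_le_dist)
  also have "\<dots> \<le> dist p q"
    by (rule dist_snd_le)
  finally show "setdist B D \<le> dist p q" .
qed

lemma R_disjoint_prod_family:
  assumes \<U>: "R_disjoint r \<U>" and \<V>: "R_disjoint r \<V>"
  shows "R_disjoint r (prod_family \<U> \<V>)"
  unfolding R_disjoint_def
proof (intro conjI ballI impI)
  fix W assume "W \<in> prod_family \<U> \<V>"
  then show "W \<noteq> {}"
    using \<U> \<V> by (auto simp: prod_family_def R_disjoint_def)
next
  fix W W' assume "W \<in> prod_family \<U> \<V>" "W' \<in> prod_family \<U> \<V>" "W \<noteq> W'"
  then obtain U V U' V' where UV: "W = U \<times> V" "W' = U' \<times> V'" "U \<in> \<U>" "U' \<in> \<U>" "V \<in> \<V>" "V' \<in> \<V>"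
    and "U \<noteq> U' \<or> V \<noteq> V'"
    by (auto simp: prod_family_def)
  have ne: "U \<times> V \<noteq> {}" "U' \<times> V' \<noteq> {}"
    using UV \<U> \<V> by (auto simp: R_disjoint_def)
  show "r < setdist W W'"
  proof (cases "U = U'")
    case False
    then have "r < setdist U U'"
      using \<U> UV by (auto simp: R_disjoint_def)
    then show ?thesis
      using setdist_le_setdist_Times_fst[OF ne] UV by simp
  next
    case True
    with \<open>U \<noteq> U' \<or> V \<noteq> V'\<close> have "r < setdist V V'"
      using \<V> UV by (auto simp: R_disjoint_def)
    then show ?thesis
      using setdist_le_setdist_Times_snd[OF ne] UV by simp
  qed
qed

lemma uniformly_bounded_prod_family:
  assumes "uniformly_bounded \<U>" "uniformly_bounded \<V>"
  shows "uniformly_bounded (prod_family \<U> \<V>)"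
proof -
  obtain D E where D: "\<And>U x y. U \<in> \<U> \<Longrightarrow> x \<in> U \<Longrightarrow> y \<in> U \<Longrightarrow> dist x y \<le> D"
    and E: "\<And>V x y. V \<in> \<V> \<Longrightarrow> x \<in> V \<Longrightarrow> y \<in> V \<Longrightarrow> dist x y \<le> E"
    using assms unfolding uniformly_bounded_def by metis
  have "dist (x, y) (x', y') \<le> D + E" if "U \<in> \<U>" "V \<in> \<V>" "(x, y) \<in> U \<times> V" "(x', y') \<in> U \<times> V"
    for U V x y x' y'
    using that D[of U x x'] E[of V y y'] dist_Pair_le_add[of x y x' y'] by auto
  then show ?thesis
    unfolding uniformly_bounded_def prod_family_def by blast
qed

lemma bounded_R_disjoint_prod_family:
  assumes "bounded_R_disjoint r X \<U>" "bounded_R_disjoint r Y \<V>"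
  shows "bounded_R_disjoint r (X \<times> Y) (prod_family \<U> \<V>)"
proof -
  have "\<forall>W\<in>prod_family \<U> \<V>. W \<subseteq> X \<times> Y"
    using assms by (auto simp: bounded_R_disjoint_def prod_family_def)
  then show ?thesis
    using assms
    by (simp add: bounded_R_disjoint_def R_disjoint_prod_family uniformly_bounded_prod_family)
qed

lemma bounded_R_disjoint_antimono:
  "bounded_R_disjoint r S \<U> \<Longrightarrow> r' \<le> r \<Longrightarrow> bounded_R_disjoint r' S \<U>"
  unfolding bounded_R_disjoint_def R_disjoint_def by (meson order_le_less_trans)

definition block_index :: "(nat \<Rightarrow> nat) \<Rightarrow> nat \<Rightarrow> nat" where
  "block_index b m = (LEAST i. m < b (Suc i))"

lemma block_index_bounds:
  assumes "strict_mono b" "b 0 = 0"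
  shows "b (block_index b m) \<le> m" "m < b (Suc (block_index b m))"
proof -
  have "m < b (Suc m)"
    using strict_mono_imp_increasing[OF assms(1), of "Suc m"] by simp
  then show "m < b (Suc (block_index b m))"
    unfolding block_index_def by (rule LeastI)
  show "b (block_index b m) \<le> m"
  proof (cases "block_index b m")
    case (Suc i)
    then have "\<not> m < b (Suc i)"
      using not_less_Least[of i "\<lambda>i. m < b (Suc i)"] by (simp add: block_index_def)
    then show ?thesis
      using Suc by simp
  qed (simp add: assms(2))
qed

lemma block_index_eqI:
  assumes "strict_mono b" "b i \<le> m" "m < b (Suc i)"
  shows "block_index b m = i"
  unfolding block_index_def
proof (rule Least_equality)
  show "m < b (Suc i)" by fact
  fix i' assume "m < b (Suc i')"
  then show "i \<le> i'"
    using assms strict_mono_less_eq[OF assms(1), of "Suc i'" i] by linarith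
qed

definition block_prod_family ::
    "(nat \<Rightarrow> nat) \<Rightarrow> (nat \<Rightarrow> 'a set set) \<Rightarrow> (nat \<Rightarrow> nat \<Rightarrow> 'b set set) \<Rightarrow> nat \<Rightarrow> ('a \<times> 'b) set set" where
  "block_prod_family b \<U> \<V> m = prod_family (\<U> (block_index b m)) (\<V> (block_index b m) (m - b (block_index b m)))"

lemma block_prod_family_eq:
  assumes "strict_mono b" "j < b (Suc i) - b i"
  shows "block_prod_family b \<U> \<V> (b i + j) = prod_family (\<U> i) (\<V> i j)"
  using assms block_index_eqI[OF assms(1), of i "b i + j"] by (simp add: block_prod_family_def)

lemma C_cover_Times:
  assumes "mono R"
    and X: "C_cover T X n \<U>"
    and Y: "\<And>i. i \<le> n \<Longrightarrow> C_cover (\<lambda>j. R (b i + j)) Y (N i) (\<V> i)"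
    and b0: "b 0 = 0" and bSuc: "\<And>i. b (Suc i) = b i + N i + 1"
    and T: "\<And>i. i \<le> n \<Longrightarrow> R (b i + N i) \<le> T i"
  shows "C_cover R (X \<times> Y) (b (Suc n) - 1) (block_prod_family b \<U> \<V>)"
proof -
  have b: "strict_mono b"
    by (rule strict_monoI_Suc) (simp add: bSuc)
  have level: "bounded_R_disjoint (R m) (X \<times> Y) (block_prod_family b \<U> \<V> m)"
    if "m < b (Suc n)" for m
  proof -
    define i where "i = block_index b m"
    define j where "j = m - b i"
    have "b i \<le> m" "m < b (Suc i)"
      using block_index_bounds[OF b b0] by (simp_all add: i_def)
    then have j: "m = b i + j" "j \<le> N i"
      using bSuc[of i] unfolding j_def by linarith+
    have "i \<le> n"
      using \<open>m < b (Suc n)\<close> \<open>b i \<le> m\<close> strict_mono_less_eq[OF b, of "Suc n" i] by linarith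
    have "R m \<le> T i"
      using monoD[OF \<open>mono R\<close>, of m "b i + N i"] T[OF \<open>i \<le> n\<close>] j by linarith
    then have "bounded_R_disjoint (R m) X (\<U> i)"
      using bounded_R_disjoint_antimono X \<open>i \<le> n\<close> unfolding C_cover_def by blast
    moreover have "bounded_R_disjoint (R m) Y (\<V> i j)"
      using Y[OF \<open>i \<le> n\<close>] j by (simp add: C_cover_def)
    ultimately show ?thesis
      using block_prod_family_eq[OF b, of j i \<U> \<V>] bounded_R_disjoint_prod_family j bSuc[of i]
      by simp
  qed
  have cover: "\<exists>m < b (Suc n). p \<in> \<Union>(block_prod_family b \<U> \<V> m)" if "p \<in> X \<times> Y" for p
  proof -
    obtain x y where p: "p = (x, y)" "x \<in> X" "y \<in> Y"
      using \<open>p \<in> X \<times> Y\<close> by blast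
    then obtain i U where i: "i \<le> n" "U \<in> \<U> i" "x \<in> U"
      using X by (auto simp: C_cover_def)
    then obtain j V where j: "j \<le> N i" "V \<in> \<V> i j" "y \<in> V"
      using Y[OF \<open>i \<le> n\<close>] \<open>y \<in> Y\<close> by (auto simp: C_cover_def)
    have "b (Suc i) \<le> b (Suc n)"
      using strict_mono_less_eq[OF b] \<open>i \<le> n\<close> by simp
    then have "b i + j < b (Suc n)"
      using j bSuc[of i] by linarith
    moreover have "p \<in> \<Union>(block_prod_family b \<U> \<V> (b i + j))"
      using block_prod_family_eq[OF b, of j i \<U> \<V>] bSuc[of i] p i j
      by (auto simp: prod_family_def)
    ultimately show ?thesis
      by blast
  qed
  have "0 < b (Suc n)"
    by (simp add: bSuc)
  then have le_iff: "m \<le> b (Suc n) - 1 \<longleftrightarrow> m < b (Suc n)" for m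
    by linarith
  have "X \<times> Y \<subseteq> (\<Union>m\<le>b (Suc n) - 1. \<Union>(block_prod_family b \<U> \<V> m))"
    using cover by (force simp: le_iff)
  with level show ?thesis
    unfolding C_cover_def le_iff by blast
qed

theorem theorem3p1:
  fixes X :: "'a::metric_space set" and Y :: "'b::metric_space set"
  assumes "asymptotic_property_C X" and "asymptotic_property_C Y"
  shows "asymptotic_property_C (X \<times> Y)"
  unfolding asymptotic_property_C_iff_C_cover
proof (intro allI impI, elim conjE)
  fix R :: "nat \<Rightarrow> real"
  assume R: "\<forall>i. R i > 0" "mono R"
  obtain N \<V> where \<V>: "\<And>k. C_cover (\<lambda>j. R (k + j)) Y (N k) (\<V> k)"
    using asymptotic_property_C_shifted_covers[OF assms(2)] R by blast
  define b where "b = rec_nat 0 (\<lambda>_ k. k + N k + 1)"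
  have b0: "b 0 = 0" and bSuc: "\<And>i. b (Suc i) = b i + N (b i) + 1"
    by (simp_all add: b_def)
  define T where "T i = R (b i + N (b i))" for i
  have "mono T"
    unfolding T_def by (rule incseq_SucI, rule monoD[OF R(2)]) (simp add: bSuc)
  moreover have "\<forall>i. T i > 0"
    using R(1) by (simp add: T_def)
  ultimately obtain n \<U> where "C_cover T X n \<U>"
    using assms(1) unfolding asymptotic_property_C_iff_C_cover by blast
  from C_cover_Times[OF R(2) this \<V> b0 bSuc]
  show "\<exists>n \<W>. C_cover R (X \<times> Y) n \<W>"
    by (auto simp: T_def)
qed

end
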